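(* Let $\Xi$ be a standard manageable groupoid with unit space $X$ and main orbit $X_0$. Then the map $(\mathrm r,\mathrm d):\Xi(X_0)\to X_0\times X_0$, $\xi\mapsto(\mathrm r(\xi),\mathrm d(\xi))$, is a homeomorphism.
   Context: Manageable groupoid: Hausdorff locally compact $\sigma$-compact groupoid with compact unit space $X$, étale and amenable. It is standard if there is a closed invariant subset $X_\infty\subset X$ such that $X_0:=X\setminus X_\infty$ is a dense orbit (for the equivalence relation $x\cong y$ iff some $\xi$ has $\mathrm d(\xi)=x$, $\mathrm r(\xi)=y$), the isotropy groups $\Xi^z_z=\{\xi:\mathrm r(\xi)=z=\mathrm d(\xi)\}$ are trivial for $z\in X_0$, and $\Xi(X_0)=\{\xi:\mathrm r(\xi),\mathrm d(\xi)\in X_0\}$ is second countable in the subspace topology. $X_0$ is called the main orbit. *)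

theory Defs
  imports "HOL-Analysis.Analysis"
begin

text \<open>A groupoid is given by a topology \<open>G\<close> on the arrows (carrier \<open>topspace G\<close>),
  a unit space \<open>U \<subseteq> topspace G\<close>, range and source maps \<open>r\<close>, \<open>d\<close>,
  a partial multiplication \<open>m\<close> (defined on pairs with \<open>d a = r b\<close>) and an inversion \<open>i\<close>.\<close>

definition composable :: "'a topology \<Rightarrow> ('a \<Rightarrow> 'a) \<Rightarrow> ('a \<Rightarrow> 'a) \<Rightarrow> ('a \<times> 'a) set" where
  "composable G r d = {(a, b). a \<in> topspace G \<and> b \<in> topspace G \<and> d a = r b}"

definition groupoid ::
  "'a topology \<Rightarrow> 'a set \<Rightarrow> ('a \<Rightarrow> 'a) \<Rightarrow> ('a \<Rightarrow> 'a) \<Rightarrow> ('a \<Rightarrow> 'a \<Rightarrow> 'a) \<Rightarrow> ('a \<Rightarrow> 'a) \<Rightarrow> bool" where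
  "groupoid G U r d m i \<longleftrightarrow>
     U \<subseteq> topspace G \<and>
     (\<forall>a\<in>topspace G. r a \<in> U \<and> d a \<in> U) \<and>
     (\<forall>x\<in>U. r x = x \<and> d x = x) \<and>
     (\<forall>a\<in>topspace G. \<forall>b\<in>topspace G. d a = r b \<longrightarrow>
        m a b \<in> topspace G \<and> r (m a b) = r a \<and> d (m a b) = d b) \<and>
     (\<forall>a\<in>topspace G. \<forall>b\<in>topspace G. \<forall>c\<in>topspace G. d a = r b \<and> d b = r c \<longrightarrow>
        m (m a b) c = m a (m b c)) \<and>
     (\<forall>a\<in>topspace G. m (r a) a = a \<and> m a (d a) = a) \<and>
     (\<forall>a\<in>topspace G. i a \<in> topspace G \<and> r (i a) = d a \<and> d (i a) = r a \<and>
        m a (i a) = r a \<and> m (i a) a = d a)"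

definition topological_groupoid ::
  "'a topology \<Rightarrow> 'a set \<Rightarrow> ('a \<Rightarrow> 'a) \<Rightarrow> ('a \<Rightarrow> 'a) \<Rightarrow> ('a \<Rightarrow> 'a \<Rightarrow> 'a) \<Rightarrow> ('a \<Rightarrow> 'a) \<Rightarrow> bool" where
  "topological_groupoid G U r d m i \<longleftrightarrow>
     groupoid G U r d m i \<and>
     continuous_map (subtopology (prod_topology G G) (composable G r d)) G (\<lambda>(a, b). m a b) \<and>
     continuous_map G G i \<and>
     continuous_map G (subtopology G U) r \<and>
     continuous_map G (subtopology G U) d"

definition etale_groupoid ::
  "'a topology \<Rightarrow> 'a set \<Rightarrow> ('a \<Rightarrow> 'a) \<Rightarrow> ('a \<Rightarrow> 'a) \<Rightarrow> ('a \<Rightarrow> 'a \<Rightarrow> 'a) \<Rightarrow> ('a \<Rightarrow> 'a) \<Rightarrow> bool" where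
  "etale_groupoid G U r d m i \<longleftrightarrow>
     topological_groupoid G U r d m i \<and>
     (\<forall>\<xi>\<in>topspace G. \<exists>V. openin G V \<and> \<xi> \<in> V \<and>
        openin (subtopology G U) (r ` V) \<and>
        homeomorphic_map (subtopology G V) (subtopology G (r ` V)) r)"

definition rfib :: "'a topology \<Rightarrow> ('a \<Rightarrow> 'a) \<Rightarrow> 'a \<Rightarrow> 'a set" where
  "rfib G r x = {h \<in> topspace G. r h = x}"

text \<open>A net is represented by its image filter \<open>F\<close> on the function space (proper filter).\<close>
definition amenable_groupoid ::
  "'a topology \<Rightarrow> 'a set \<Rightarrow> ('a \<Rightarrow> 'a) \<Rightarrow> ('a \<Rightarrow> 'a) \<Rightarrow> ('a \<Rightarrow> 'a \<Rightarrow> 'a) \<Rightarrow> ('a \<Rightarrow> 'a) \<Rightarrow> bool" where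
  "amenable_groupoid G U r d m i \<longleftrightarrow>
     (\<exists>F :: ('a \<Rightarrow> real) filter. F \<noteq> bot \<and>
        (\<forall>\<^sub>F g in F. continuous_map G euclideanreal g \<and> (\<forall>h\<in>topspace G. g h \<ge> 0) \<and>
                     compactin G (G closure_of {h \<in> topspace G. g h \<noteq> 0})) \<and>
        (\<forall>K e. compactin G K \<and> K \<subseteq> U \<and> e > 0 \<longrightarrow>
           (\<forall>\<^sub>F g in F. \<forall>x\<in>K. \<bar>infsum g (rfib G r x) - 1\<bar> < e)) \<and>
        (\<forall>K e. compactin G K \<and> e > 0 \<longrightarrow>
           (\<forall>\<^sub>F g in F. \<forall>\<xi>\<in>K.
              infsum (\<lambda>h. \<bar>g (m (i \<xi>) h) - g h\<bar>) (rfib G r (r \<xi>)) < e)))"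

definition sigma_compact_space :: "'a topology \<Rightarrow> bool" where
  "sigma_compact_space G \<longleftrightarrow>
     (\<exists>\<C>. countable \<C> \<and> (\<forall>C\<in>\<C>. compactin G C) \<and> \<Union>\<C> = topspace G)"

definition manageable_groupoid ::
  "'a topology \<Rightarrow> 'a set \<Rightarrow> ('a \<Rightarrow> 'a) \<Rightarrow> ('a \<Rightarrow> 'a) \<Rightarrow> ('a \<Rightarrow> 'a \<Rightarrow> 'a) \<Rightarrow> ('a \<Rightarrow> 'a) \<Rightarrow> bool" where
  "manageable_groupoid G U r d m i \<longleftrightarrow>
     etale_groupoid G U r d m i \<and> amenable_groupoid G U r d m i \<and>
     Hausdorff_space G \<and> locally_compact_space G \<and> sigma_compact_space G \<and>
     compactin G U"

definition orbit_equiv :: "'a topology \<Rightarrow> ('a \<Rightarrow> 'a) \<Rightarrow> ('a \<Rightarrow> 'a) \<Rightarrow> 'a \<Rightarrow> 'a \<Rightarrow> bool" where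
  "orbit_equiv G r d x y \<longleftrightarrow> (\<exists>\<xi>\<in>topspace G. d \<xi> = x \<and> r \<xi> = y)"

definition reduction :: "'a topology \<Rightarrow> ('a \<Rightarrow> 'a) \<Rightarrow> ('a \<Rightarrow> 'a) \<Rightarrow> 'a set \<Rightarrow> 'a set" where
  "reduction G r d A = {\<xi> \<in> topspace G. r \<xi> \<in> A \<and> d \<xi> \<in> A}"

text \<open>Standardness witnessed by the closed invariant set \<open>Xinf\<close>; the main orbit is \<open>U - Xinf\<close>.\<close>
definition standard_wrt ::
  "'a topology \<Rightarrow> 'a set \<Rightarrow> ('a \<Rightarrow> 'a) \<Rightarrow> ('a \<Rightarrow> 'a) \<Rightarrow> 'a set \<Rightarrow> bool" where
  "standard_wrt G U r d Xinf \<longleftrightarrow>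
     Xinf \<subseteq> U \<and> closedin (subtopology G U) Xinf \<and>
     (\<forall>x\<in>Xinf. \<forall>y. orbit_equiv G r d x y \<longrightarrow> y \<in> Xinf) \<and>
     (\<exists>x0\<in>U - Xinf. U - Xinf = {y. orbit_equiv G r d x0 y}) \<and>
     (subtopology G U) closure_of (U - Xinf) = U \<and>
     (\<forall>z\<in>U - Xinf. {\<xi> \<in> topspace G. r \<xi> = z \<and> d \<xi> = z} = {z}) \<and>
     second_countable (subtopology G (reduction G r d (U - Xinf)))"

end

theory Submission
  imports Defs
begin

text \<open>The main orbit \<open>X\<^sub>0\<close> is the image under \<open>d\<close> of the range fibre over one of its points;
  etaleness makes that fibre discrete, and it lies in the second countable space \<open>\<Xi>(X\<^sub>0)\<close>, so
  \<open>X\<^sub>0\<close> is countable. Being open in the compact Hausdorff unit space, \<open>X\<^sub>0\<close> is locally compact, so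
  by Baire's theorem one of its points is isolated. Arrows of an etale groupoid carry isolated
  units to isolated units and sit isolated over them, so \<open>X\<^sub>0\<close> and \<open>\<Xi>(X\<^sub>0)\<close> are discrete. Finally
  transitivity and trivial isotropy make \<open>(r, d)\<close> a bijection \<open>\<Xi>(X\<^sub>0) \<rightarrow> X\<^sub>0 \<times> X\<^sub>0\<close>, and a
  bijection between discrete spaces is a homeomorphism.\<close>

lemma homeomorphic_map_discrete_topology:
  assumes "bij_betw f A B"
  shows "homeomorphic_map (discrete_topology A) (discrete_topology B) f"
  using assms
  by (intro bijective_open_imp_homeomorphic_map)
     (auto simp: bij_betw_def open_map_into_discrete_topology)

lemma subtopology_eq_discrete_topologyI:
  assumes "S \<subseteq> topspace X" and "\<And>x. x \<in> S \<Longrightarrow> openin X {x}"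
  shows "subtopology X S = discrete_topology S"
  using assms
  by (metis discrete_topology_unique subset_openin_subtopology topspace_subtopology_subset
      empty_subsetI insert_subset)

lemma countable_discrete_subset_of_second_countable:
  assumes "second_countable (subtopology X A)" and "S \<subseteq> A"
    and "subtopology X S = discrete_topology S"
  shows "countable S"
proof -
  have "subtopology (subtopology X A) S = discrete_topology S"
    using assms(2,3) by (simp add: subtopology_subtopology Int_absorb1)
  then show ?thesis
    using second_countable_subtopology[OF assms(1), of S]
    by (simp add: second_countable_discrete_topology)
qed

lemma countable_locally_compact_Hausdorff_isolated_point:
  assumes "locally_compact_space X" and "Hausdorff_space X"
    and "countable (topspace X)" and "topspace X \<noteq> {}"
  obtains x where "x \<in> topspace X" and "openin X {x}"
proof -
  have "\<exists>x\<in>topspace X. X interior_of {x} \<noteq> {}"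
  proof (rule ccontr)
    assume no_interior: "\<not> ?thesis"
    have "X interior_of \<Union>((\<lambda>x. {x}) ` topspace X) = {}"
    proof (rule Baire_category_alt)
      show "completely_metrizable_space X \<or> locally_compact_space X \<and> regular_space X"
        using assms(1,2) locally_compact_Hausdorff_imp_regular_space by blast
      show "countable ((\<lambda>x. {x}) ` topspace X)"
        using assms(3) by simp
      show "closedin X T \<and> X interior_of T = {}" if "T \<in> (\<lambda>x. {x}) ` topspace X" for T
        using that no_interior closedin_t1_singleton[OF Hausdorff_imp_t1_space[OF assms(2)]]
        by auto
    qed
    then show False
      using assms(4) by simp
  qed
  then obtain x where "x \<in> topspace X" "X interior_of {x} \<noteq> {}"
    by blast
  moreover from this have "X interior_of {x} = {x}"
    using interior_of_subset subset_singletonD by metis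
  ultimately show thesis
    using that by (metis openin_interior_of)
qed

lemma groupoidD:
  assumes "groupoid G U r d m i"
  shows "U \<subseteq> topspace G"
    and "\<And>a. a \<in> topspace G \<Longrightarrow> r a \<in> U \<and> d a \<in> U"
    and "\<And>a b. \<lbrakk>a \<in> topspace G; b \<in> topspace G; d a = r b\<rbrakk>
           \<Longrightarrow> m a b \<in> topspace G \<and> r (m a b) = r a \<and> d (m a b) = d b"
    and "\<And>a b c. \<lbrakk>a \<in> topspace G; b \<in> topspace G; c \<in> topspace G; d a = r b; d b = r c\<rbrakk>
           \<Longrightarrow> m (m a b) c = m a (m b c)"
    and "\<And>a. a \<in> topspace G \<Longrightarrow> m (r a) a = a \<and> m a (d a) = a"
    and "\<And>a. a \<in> topspace G \<Longrightarrow> i a \<in> topspace G \<and> r (i a) = d a \<and> d (i a) = r a \<and>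
           m a (i a) = r a \<and> m (i a) a = d a"
  using assms unfolding groupoid_def by blast+

lemma groupoid_inverse_inverse:
  assumes "groupoid G U r d m i" and a: "a \<in> topspace G"
  shows "i (i a) = a"
proof -
  note gp = groupoidD[OF assms(1)]
  have ia: "i a \<in> topspace G" and iia: "i (i a) \<in> topspace G"
    using gp(6) a by auto
  have "i (i a) = m (i (i a)) (m (i a) a)"
    using gp(5)[OF iia] gp(6)[OF ia] gp(6)[OF a] by auto
  also have "\<dots> = m (m (i (i a)) (i a)) a"
    using gp(4)[OF iia ia a] gp(6)[OF ia] gp(6)[OF a] by auto
  also have "\<dots> = a"
    using gp(5)[OF a] gp(6)[OF ia] gp(6)[OF a] by auto
  finally show ?thesis .
qed

lemma groupoid_arrow_eqI:
  assumes "groupoid G U r d m i" and "\<xi> \<in> topspace G" and "\<eta> \<in> topspace G"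
    and "r \<xi> = r \<eta>" and "d \<xi> = d \<eta>"
    and isotropy: "{\<zeta> \<in> topspace G. r \<zeta> = d \<xi> \<and> d \<zeta> = d \<xi>} = {d \<xi>}"
  shows "\<xi> = \<eta>"
proof -
  note gp = groupoidD[OF assms(1)]
  have i\<eta>: "i \<eta> \<in> topspace G" "r (i \<eta>) = d \<eta>" "d (i \<eta>) = r \<eta>"
    using gp(6) assms(3) by auto
  have "m (i \<eta>) \<xi> \<in> topspace G" "r (m (i \<eta>) \<xi>) = d \<xi>" "d (m (i \<eta>) \<xi>) = d \<xi>"
    using gp(3)[OF i\<eta>(1) assms(2)] i\<eta> assms(4,5) by auto
  then have loop: "m (i \<eta>) \<xi> = d \<xi>"
    using isotropy by blast
  have "\<eta> = m \<eta> (m (i \<eta>) \<xi>)"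
    using gp(5) assms(3,5) loop by simp
  also have "\<dots> = m (m \<eta> (i \<eta>)) \<xi>"
    using gp(4)[OF assms(3) i\<eta>(1) assms(2)] i\<eta> assms(4,5) by simp
  also have "\<dots> = \<xi>"
    using gp(5)[OF assms(2)] gp(6)[OF assms(3)] assms(4) by simp
  finally show ?thesis
    by simp
qed

lemma etale_groupoidD:
  assumes "etale_groupoid G U r d m i"
  shows "groupoid G U r d m i"
    and "continuous_map G G i"
    and "continuous_map G (subtopology G U) d"
    and "\<And>\<xi>. \<xi> \<in> topspace G \<Longrightarrow> \<exists>V. openin G V \<and> \<xi> \<in> V \<and>
           openin (subtopology G U) (r ` V) \<and>
           homeomorphic_map (subtopology G V) (subtopology G (r ` V)) r"
  using assms unfolding etale_groupoid_def topological_groupoid_def by blast+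

lemma etale_range_locally_injective:
  assumes "etale_groupoid G U r d m i" and "\<xi> \<in> topspace G"
  obtains V where "openin G V" and "\<xi> \<in> V" and "inj_on r V"
proof -
  obtain V where V: "openin G V" "\<xi> \<in> V"
    and hom: "homeomorphic_map (subtopology G V) (subtopology G (r ` V)) r"
    using etale_groupoidD(4)[OF assms] by blast
  have "inj_on r V"
    using homeomorphic_imp_injective_map[OF hom] openin_subset[OF V(1)]
    by (simp add: Int_absorb1)
  with V that show thesis
    by blast
qed

lemma etale_range_fibre_discrete:
  assumes "etale_groupoid G U r d m i"
  shows "subtopology G (rfib G r x) = discrete_topology (rfib G r x)"
proof -
  have "openin (subtopology G (rfib G r x)) {\<eta>}" if \<eta>: "\<eta> \<in> rfib G r x" for \<eta>
  proof -
    obtain V where V: "openin G V" "\<eta> \<in> V" "inj_on r V"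
      using etale_range_locally_injective[OF assms] \<eta> unfolding rfib_def by blast
    have "V \<inter> rfib G r x = {\<eta>}"
      using V \<eta> unfolding rfib_def by (auto dest: inj_onD)
    then show ?thesis
      using V(1) by (metis openin_subtopology_Int2 inf_commute)
  qed
  then show ?thesis
    by (subst eq_commute) (auto simp: discrete_topology_unique rfib_def)
qed

text \<open>An arrow over an isolated unit is isolated: it is the only arrow with that source whose
  inverse lies in a neighbourhood on which \<open>r\<close> is injective.\<close>

lemma etale_openin_singleton_arrow:
  assumes etale: "etale_groupoid G U r d m i" and \<xi>: "\<xi> \<in> topspace G"
    and isolated: "openin (subtopology G U) {d \<xi>}"
  shows "openin G {\<xi>}"
proof -
  note gp = groupoidD[OF etale_groupoidD(1)[OF etale]]
  obtain V where V: "openin G V" "i \<xi> \<in> V" "inj_on r V"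
    using etale_range_locally_injective[OF etale] gp(6)[OF \<xi>] by blast
  have unique: "\<zeta> = \<xi>" if \<zeta>: "\<zeta> \<in> topspace G" "d \<zeta> = d \<xi>" "i \<zeta> \<in> V" for \<zeta>
  proof -
    have "r (i \<zeta>) = r (i \<xi>)"
      using gp(6) \<zeta> \<xi> by simp
    then have "i \<zeta> = i \<xi>"
      using V \<zeta>(3) by (meson inj_onD)
    then show ?thesis
      using groupoid_inverse_inverse[OF etale_groupoidD(1)[OF etale]] \<zeta>(1) \<xi> by metis
  qed
  have "openin G {\<zeta> \<in> topspace G. d \<zeta> \<in> {d \<xi>}}"
    using openin_continuous_map_preimage[OF etale_groupoidD(3)[OF etale] isolated] .
  moreover have "openin G {\<zeta> \<in> topspace G. i \<zeta> \<in> V}"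
    using openin_continuous_map_preimage[OF etale_groupoidD(2)[OF etale] V(1)] .
  ultimately have "openin G ({\<zeta> \<in> topspace G. d \<zeta> \<in> {d \<xi>}} \<inter> {\<zeta> \<in> topspace G. i \<zeta> \<in> V})"
    by (rule openin_Int)
  moreover have "{\<zeta> \<in> topspace G. d \<zeta> \<in> {d \<xi>}} \<inter> {\<zeta> \<in> topspace G. i \<zeta> \<in> V} = {\<xi>}"
    using unique \<xi> V(2) by auto
  ultimately show ?thesis
    by simp
qed

lemma etale_openin_singleton_range:
  assumes etale: "etale_groupoid G U r d m i" and \<xi>: "\<xi> \<in> topspace G"
    and isolated: "openin G {\<xi>}"
  shows "openin (subtopology G U) {r \<xi>}"
proof -
  obtain V where V: "openin G V" "\<xi> \<in> V" "openin (subtopology G U) (r ` V)"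
    and hom: "homeomorphic_map (subtopology G V) (subtopology G (r ` V)) r"
    using etale_groupoidD(4)[OF etale \<xi>] by blast
  have rVU: "r ` V \<subseteq> U"
    using groupoidD(2)[OF etale_groupoidD(1)[OF etale]] openin_subset[OF V(1)] by blast
  have "openin (subtopology G V) {\<xi>}"
    using isolated V(2) by (simp add: subset_openin_subtopology)
  then have "openin (subtopology G (r ` V)) {r \<xi>}"
    using homeomorphic_imp_open_map[OF hom] unfolding open_map_def by (metis image_empty image_insert)
  then have "openin (subtopology (subtopology G U) (r ` V)) {r \<xi>}"
    using rVU by (simp add: subtopology_subtopology Int_absorb1)
  then show ?thesis
    using openin_trans_full V(3) by blast
qed

lemma standard_wrtD:
  assumes "standard_wrt G U r d Xinf"
  shows "closedin (subtopology G U) Xinf"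
    and "\<exists>x0\<in>U - Xinf. U - Xinf = {y. orbit_equiv G r d x0 y}"
    and "\<And>z. z \<in> U - Xinf \<Longrightarrow> {\<xi> \<in> topspace G. r \<xi> = z \<and> d \<xi> = z} = {z}"
    and "second_countable (subtopology G (reduction G r d (U - Xinf)))"
  using assms unfolding standard_wrt_def by blast+

lemma standard_main_orbit_transitive:
  assumes "groupoid G U r d m i" and "standard_wrt G U r d Xinf"
    and "y \<in> U - Xinf" and "z \<in> U - Xinf"
  obtains \<xi> where "\<xi> \<in> topspace G" and "r \<xi> = y" and "d \<xi> = z"
proof -
  note gp = groupoidD[OF assms(1)]
  obtain x0 where "U - Xinf = {y. orbit_equiv G r d x0 y}"
    using standard_wrtD(2)[OF assms(2)] by blast
  then obtain \<alpha> \<beta> where \<alpha>: "\<alpha> \<in> topspace G" "d \<alpha> = x0" "r \<alpha> = z"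
    and \<beta>: "\<beta> \<in> topspace G" "d \<beta> = x0" "r \<beta> = y"
    using assms(3,4) unfolding orbit_equiv_def by blast
  have "m \<beta> (i \<alpha>) \<in> topspace G" "r (m \<beta> (i \<alpha>)) = y" "d (m \<beta> (i \<alpha>)) = z"
    using gp(3)[of \<beta> "i \<alpha>"] gp(6)[OF \<alpha>(1)] \<alpha> \<beta> by auto
  then show thesis
    using that by blast
qed

lemma standard_main_orbit_countable:
  assumes etale: "etale_groupoid G U r d m i" and std: "standard_wrt G U r d Xinf"
  shows "countable (U - Xinf)"
proof -
  note gp = groupoidD[OF etale_groupoidD(1)[OF etale]]
  obtain x0 where x0: "x0 \<in> U - Xinf" and orbit: "U - Xinf = {y. orbit_equiv G r d x0 y}"
    using standard_wrtD(2)[OF std] by blast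
  have "d \<eta> \<in> U - Xinf" if "\<eta> \<in> rfib G r x0" for \<eta>
  proof -
    have "i \<eta> \<in> topspace G" "d (i \<eta>) = x0" "r (i \<eta>) = d \<eta>"
      using that gp(6) unfolding rfib_def by auto
    then show ?thesis
      using orbit unfolding orbit_equiv_def by blast
  qed
  then have "rfib G r x0 \<subseteq> reduction G r d (U - Xinf)"
    using x0 unfolding rfib_def reduction_def by auto
  then have "countable (rfib G r x0)"
    by (rule countable_discrete_subset_of_second_countable[OF standard_wrtD(4)[OF std] _
          etale_range_fibre_discrete[OF etale]])
  moreover have "U - Xinf \<subseteq> d ` rfib G r x0"
  proof
    fix y assume "y \<in> U - Xinf"
    then obtain \<xi> where "\<xi> \<in> topspace G" "r \<xi> = x0" "d \<xi> = y"
      using standard_main_orbit_transitive[OF etale_groupoidD(1)[OF etale] std x0] by blast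
    then show "y \<in> d ` rfib G r x0"
      unfolding rfib_def by auto
  qed
  ultimately show ?thesis
    by (meson countable_image countable_subset)
qed

lemma standard_main_orbit_isolated:
  assumes mg: "manageable_groupoid G U r d m i" and std: "standard_wrt G U r d Xinf"
    and z: "z \<in> U - Xinf"
  shows "openin (subtopology G U) {z}"
proof -
  have etale: "etale_groupoid G U r d m i" and HG: "Hausdorff_space G" and cU: "compactin G U"
    using mg unfolding manageable_groupoid_def by auto
  note gp = groupoidD[OF etale_groupoidD(1)[OF etale]]
  have open_orbit: "openin (subtopology G U) (U - Xinf)"
    using standard_wrtD(1)[OF std] gp(1) by (metis closedin_def topspace_subtopology_subset)
  have orbit_top: "subtopology (subtopology G U) (U - Xinf) = subtopology G (U - Xinf)"
    by (simp add: subtopology_subtopology Int_absorb1)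
  have "locally_compact_space (subtopology G (U - Xinf))"
    using locally_compact_space_open_subset[OF _ _ open_orbit] orbit_top HG cU
    by (metis Hausdorff_space_subtopology compact_imp_locally_compact_space compact_space_subtopology)
  moreover have "topspace (subtopology G (U - Xinf)) = U - Xinf"
    using gp(1) by auto
  ultimately obtain y where y: "y \<in> U - Xinf" "openin (subtopology G (U - Xinf)) {y}"
    using countable_locally_compact_Hausdorff_isolated_point[of "subtopology G (U - Xinf)"]
      standard_main_orbit_countable[OF etale std] HG Hausdorff_space_subtopology z
    by (metis empty_iff)
  then have "openin (subtopology G U) {y}"
    using openin_trans_full[OF _ open_orbit] orbit_top by metis
  moreover obtain \<xi> where "\<xi> \<in> topspace G" "r \<xi> = z" "d \<xi> = y"
    using standard_main_orbit_transitive[OF etale_groupoidD(1)[OF etale] std z y(1)] by blast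
  ultimately show ?thesis
    using etale_openin_singleton_range[OF etale] etale_openin_singleton_arrow[OF etale] by metis
qed

lemma standard_reduction_bij_betw:
  assumes gp: "groupoid G U r d m i" and std: "standard_wrt G U r d Xinf"
  shows "bij_betw (\<lambda>\<xi>. (r \<xi>, d \<xi>)) (reduction G r d (U - Xinf)) ((U - Xinf) \<times> (U - Xinf))"
  unfolding bij_betw_def
proof
  show "inj_on (\<lambda>\<xi>. (r \<xi>, d \<xi>)) (reduction G r d (U - Xinf))"
  proof (rule inj_onI)
    fix \<xi> \<eta> assume "\<xi> \<in> reduction G r d (U - Xinf)" "\<eta> \<in> reduction G r d (U - Xinf)"
      and "(r \<xi>, d \<xi>) = (r \<eta>, d \<eta>)"
    then show "\<xi> = \<eta>"
      using groupoid_arrow_eqI[OF gp] standard_wrtD(3)[OF std] unfolding reduction_def by auto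
  qed
  show "(\<lambda>\<xi>. (r \<xi>, d \<xi>)) ` reduction G r d (U - Xinf) = (U - Xinf) \<times> (U - Xinf)"
  proof
    show "(U - Xinf) \<times> (U - Xinf) \<subseteq> (\<lambda>\<xi>. (r \<xi>, d \<xi>)) ` reduction G r d (U - Xinf)"
    proof
      fix p assume "p \<in> (U - Xinf) \<times> (U - Xinf)"
      then obtain y z where p: "p = (y, z)" "y \<in> U - Xinf" "z \<in> U - Xinf"
        by blast
      then obtain \<xi> where "\<xi> \<in> topspace G" "r \<xi> = y" "d \<xi> = z"
        using standard_main_orbit_transitive[OF gp std] by metis
      with p show "p \<in> (\<lambda>\<xi>. (r \<xi>, d \<xi>)) ` reduction G r d (U - Xinf)"
        unfolding reduction_def by auto
    qed
  qed (auto simp: reduction_def)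
qed

theorem lemma7p2:
  fixes G :: "'a topology" and U Xinf X0 :: "'a set"
    and r d :: "'a \<Rightarrow> 'a" and m :: "'a \<Rightarrow> 'a \<Rightarrow> 'a" and i :: "'a \<Rightarrow> 'a"
  assumes "manageable_groupoid G U r d m i"
    and "standard_wrt G U r d Xinf"
    and "X0 = U - Xinf"
  shows "homeomorphic_map (subtopology G (reduction G r d X0))
           (prod_topology (subtopology G X0) (subtopology G X0)) (\<lambda>\<xi>. (r \<xi>, d \<xi>))"
proof -
  have etale: "etale_groupoid G U r d m i"
    using assms(1) unfolding manageable_groupoid_def by blast
  note gp = etale_groupoidD(1)[OF etale]
  have isolated: "openin (subtopology G U) {z}" if "z \<in> X0" for z
    using standard_main_orbit_isolated[OF assms(1,2)] that assms(3) by blast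
  have "subtopology (subtopology G U) X0 = discrete_topology X0"
    using isolated groupoidD(1)[OF gp] assms(3) by (intro subtopology_eq_discrete_topologyI) auto
  then have "subtopology G X0 = discrete_topology X0"
    using assms(3) by (simp add: subtopology_subtopology Int_absorb1)
  moreover have "subtopology G (reduction G r d X0) = discrete_topology (reduction G r d X0)"
    using isolated etale_openin_singleton_arrow[OF etale]
    by (intro subtopology_eq_discrete_topologyI) (auto simp: reduction_def)
  ultimately show ?thesis
    using homeomorphic_map_discrete_topology standard_reduction_bij_betw[OF gp assms(2)] assms(3)
    by (simp flip: prod_topology_discrete_topology)
qed

end
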